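(* Let $d\ge1$, $m\ge1$, $\nu\ge2$ be integers, $\Lambda\subset\mathbb Z^d$ finite, containing $\mathbf 0$ and symmetric, $\boldsymbol\Sigma=\{\Sigma_{\mathbf k}\}_{\mathbf k\in\Lambda}$ with $\Sigma_{-\mathbf k}=\Sigma_{\mathbf k}^*\in\mathbb C^{m\times m}$, and $\Psi$ an $m\times m$ matrix-valued function on $\mathbb T^d$ with rational entries which is bounded and coercive. Assume the Feasibility Assumption, and let $\mathbf Q^\circ\in\partial\mathscr L_+$ be the unique minimizer of $J_\nu$ over $\mathscr L_+$. Let $K(\mathbf Q^\circ)=\{\boldsymbol\Sigma_K:\ \langle\boldsymbol\Sigma_K,\mathbf Q-\mathbf Q^\circ\rangle\le0\text{ for all }\mathbf Q\in\mathscr L_+\}$. If $\boldsymbol\Sigma_K\in K(\mathbf Q^\circ)$, then $-\boldsymbol\Sigma_K\in\overline{\mathfrak C}_+$, the closure of $$\mathfrak C_+=\{\boldsymbol\Sigma:\ \langle\boldsymbol\Sigma,\mathbf Q\rangle>0\text{ for all }\mathbf Q\neq0\text{ such that }Q(e^{i\boldsymbol\theta})\ge0\ \forall\boldsymbol\theta\in\mathbb T^d\}.$$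
   Context: $\mathbb T^d=(-\pi,\pi]^d$, $\mathrm d\mu=(2\pi)^{-d}\prod_j\mathrm d\theta_j$; bounded and coercive means $aI_m\le\Psi\le bI_m$ on $\mathbb T^d$ for some $b>a>0$. All $\mathbf Q$ and $\boldsymbol\Sigma$'s are families $\{Q_{\mathbf k}\}_{\mathbf k\in\Lambda}$ of $m\times m$ complex matrices with $Q_{-\mathbf k}=Q_{\mathbf k}^*$; $Q(e^{i\boldsymbol\theta})=\sum_{\mathbf k}Q_{\mathbf k}e^{-i\langle\mathbf k,\boldsymbol\theta\rangle}$, $\langle\mathbf k,\boldsymbol\theta\rangle=\sum_jk_j\theta_j$, and $\langle\mathbf Q,\boldsymbol\Sigma\rangle=\sum_{\mathbf k}\operatorname{tr}(Q_{\mathbf k}\Sigma_{\mathbf k}^* )$. $\mathscr L_+=\{\mathbf Q:\nu\Psi^{-1}+Q\ge0\text{ on }\mathbb T^d,\ \text{not identically zero}\}$, with boundary $\partial\mathscr L_+$ the set of those $\mathbf Q$ with $\Psi^{-1}+\frac1\nu Q$ positive semidefinite on $\mathbb T^d$ and singular somewhere. $J_\nu(\mathbf Q)=\langle\mathbf Q,\boldsymbol\Sigma\rangle+\frac{\nu}{\nu-1}\int_{\mathbb T^d}\operatorname{tr}\{[\Psi^{-1}(\Psi^{-1}+\frac1\nu Q)^{-1}]^{\nu-1}\}\mathrm d\mu$ (integral over the complement of the null set where the determinant vanishes). Feasibility Assumption: there is a Hermitian nonnegative definite matrix-valued measure $M_0$ with $\int e^{i\langle\mathbf k,\boldsymbol\theta\rangle}\mathrm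 dM_0=\Sigma_{\mathbf k}$ for all $\mathbf k\in\Lambda$, and a nonnegative scalar measure $\lambda$ with $\mathrm dM_0=M'_{0,\lambda}\mathrm d\lambda$, $M'_{0,\lambda}$ positive definite on an open ball $B$ with $\lambda(B)>0$. *)

theory Defs
  imports "HOL-Analysis.Analysis"
begin

text \<open>Conventions. The dimension d is CARD('d), the matrix size m is CARD('m).
  Frequencies k live in int^'d, angles theta in real^'d, m x m complex
  matrices are complex^'m^'m.\<close>

definition torus :: "(real^'d) set" where
  "torus = {\<theta>. \<forall>j. - pi < \<theta>$j \<and> \<theta>$j \<le> pi}"

definition kdot :: "int^'d \<Rightarrow> real^'d \<Rightarrow> real" where
  "kdot k \<theta> = (\<Sum>j\<in>UNIV. of_int (k$j) * \<theta>$j)"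

definition madj :: "complex^'m^'m \<Rightarrow> complex^'m^'m" where
  "madj A = (\<chi> i j. cnj (A$j$i))"

definition csmult :: "complex \<Rightarrow> complex^'m^'m \<Rightarrow> complex^'m^'m" where
  "csmult c A = (\<chi> i j. c * A$i$j)"

definition hermitian :: "complex^'m^'m \<Rightarrow> bool" where
  "hermitian A \<longleftrightarrow> madj A = A"

definition qform :: "complex^'m^'m \<Rightarrow> complex^'m \<Rightarrow> complex" where
  "qform A v = (\<Sum>i\<in>UNIV. cnj (v$i) * (A *v v)$i)"

definition psd :: "complex^'m^'m \<Rightarrow> bool" where
  "psd A \<longleftrightarrow> hermitian A \<and> (\<forall>v. 0 \<le> Re (qform A v))"

definition pd :: "complex^'m^'m \<Rightarrow> bool" where
  "pd A \<longleftrightarrow> hermitian A \<and> (\<forall>v. v \<noteq> 0 \<longrightarrow> 0 < Re (qform A v))"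

fun mpow :: "complex^'m^'m \<Rightarrow> nat \<Rightarrow> complex^'m^'m" where
  "mpow A 0 = mat 1"
| "mpow A (Suc n) = A ** mpow A n"

definition fams :: "(int^'d) set \<Rightarrow> (int^'d \<Rightarrow> complex^'m^'m) set" where
  "fams \<Lambda> = {Q. (\<forall>k. k \<notin> \<Lambda> \<longrightarrow> Q k = 0) \<and> (\<forall>k\<in>\<Lambda>. Q (-k) = madj (Q k))}"

definition Qeval :: "(int^'d) set \<Rightarrow> (int^'d \<Rightarrow> complex^'m^'m) \<Rightarrow> real^'d \<Rightarrow> complex^'m^'m" where
  "Qeval \<Lambda> Q \<theta> = (\<Sum>k\<in>\<Lambda>. csmult (cis (- kdot k \<theta>)) (Q k))"

text \<open>The pairing <Q,Sigma> = sum_k tr(Q_k Sigma_k^*), which is real for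
  families in fams Lambda; we take its real part.\<close>
definition pairing :: "(int^'d) set \<Rightarrow> (int^'d \<Rightarrow> complex^'m^'m) \<Rightarrow> (int^'d \<Rightarrow> complex^'m^'m) \<Rightarrow> real" where
  "pairing \<Lambda> Q S = Re (\<Sum>k\<in>\<Lambda>. trace (Q k ** madj (S k)))"

definition trig_poly :: "(int^'d) set \<Rightarrow> (int^'d \<Rightarrow> complex) \<Rightarrow> real^'d \<Rightarrow> complex" where
  "trig_poly A c \<theta> = (\<Sum>k\<in>A. c k * cis (kdot k \<theta>))"

definition rational_mfun :: "(real^'d \<Rightarrow> complex^'m^'m) \<Rightarrow> bool" where
  "rational_mfun \<Psi> \<longleftrightarrow> (\<forall>i j. \<exists>A B p q. finite A \<and> finite B \<and>
      (\<forall>\<theta>\<in>torus. trig_poly B q \<theta> \<noteq> 0) \<and>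
      (\<forall>\<theta>\<in>torus. \<Psi> \<theta> $ i $ j = trig_poly A p \<theta> / trig_poly B q \<theta>))"

definition bounded_coercive :: "(real^'d \<Rightarrow> complex^'m^'m) \<Rightarrow> bool" where
  "bounded_coercive \<Psi> \<longleftrightarrow> (\<exists>a b. 0 < a \<and> a < b \<and> (\<forall>\<theta>\<in>torus.
      psd (\<Psi> \<theta> - mat (complex_of_real a)) \<and> psd (mat (complex_of_real b) - \<Psi> \<theta>)))"

definition Lplus :: "(int^'d) set \<Rightarrow> (real^'d \<Rightarrow> complex^'m^'m) \<Rightarrow> nat \<Rightarrow> (int^'d \<Rightarrow> complex^'m^'m) set" where
  "Lplus \<Lambda> \<Psi> \<nu> = {Q \<in> fams \<Lambda>.
      (\<forall>\<theta>\<in>torus. psd (real \<nu> *\<^sub>R matrix_inv (\<Psi> \<theta>) + Qeval \<Lambda> Q \<theta>)) \<and>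
      (\<exists>\<theta>\<in>torus. real \<nu> *\<^sub>R matrix_inv (\<Psi> \<theta>) + Qeval \<Lambda> Q \<theta> \<noteq> 0)}"

definition Lplus_boundary :: "(int^'d) set \<Rightarrow> (real^'d \<Rightarrow> complex^'m^'m) \<Rightarrow> nat \<Rightarrow> (int^'d \<Rightarrow> complex^'m^'m) set" where
  "Lplus_boundary \<Lambda> \<Psi> \<nu> = {Q \<in> fams \<Lambda>.
      (\<forall>\<theta>\<in>torus. psd (matrix_inv (\<Psi> \<theta>) + (1 / real \<nu>) *\<^sub>R Qeval \<Lambda> Q \<theta>)) \<and>
      (\<exists>\<theta>\<in>torus. det (matrix_inv (\<Psi> \<theta>) + (1 / real \<nu>) *\<^sub>R Qeval \<Lambda> Q \<theta>) = 0)}"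

text \<open>Integrand of J_nu (set to 0 on the set where the determinant vanishes),
  including the normalisation (2 pi)^{-d} of d mu.\<close>
definition J_integrand :: "(int^'d) set \<Rightarrow> (real^'d \<Rightarrow> complex^'m^'m) \<Rightarrow> nat \<Rightarrow> (int^'d \<Rightarrow> complex^'m^'m) \<Rightarrow> real^'d \<Rightarrow> real" where
  "J_integrand \<Lambda> \<Psi> \<nu> Q \<theta> =
    (let P = matrix_inv (\<Psi> \<theta>) + (1 / real \<nu>) *\<^sub>R Qeval \<Lambda> Q \<theta> in
     if det P = 0 then 0
     else Re (trace (mpow (matrix_inv (\<Psi> \<theta>) ** matrix_inv P) (\<nu> - 1))) / (2 * pi) ^ CARD('d))"

text \<open>J_nu as an extended real (the integral term is a nonnegative integral).\<close>
definition J_nu :: "(int^'d) set \<Rightarrow> (int^'d \<Rightarrow> complex^'m^'m) \<Rightarrow> (real^'d \<Rightarrow> complex^'m^'m) \<Rightarrow> nat \<Rightarrow> (int^'d \<Rightarrow> complex^'m^'m) \<Rightarrow> ereal" where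
  "J_nu \<Lambda> \<Sigma> \<Psi> \<nu> Q = ereal (pairing \<Lambda> Q \<Sigma>) +
     ereal (real \<nu> / (real \<nu> - 1)) *
     enn2ereal (\<integral>\<^sup>+ \<theta>. ennreal (J_integrand \<Lambda> \<Psi> \<nu> Q \<theta>) * indicator torus \<theta> \<partial>lborel)"

definition feasible :: "(int^'d) set \<Rightarrow> (int^'d \<Rightarrow> complex^'m^'m) \<Rightarrow> bool" where
  "feasible \<Lambda> \<Sigma> \<longleftrightarrow> (\<exists>(lam :: (real^'d) measure) (M' :: real^'d \<Rightarrow> complex^'m^'m).
      sets lam = sets lborel \<and> finite_measure lam \<and> emeasure lam (UNIV - torus) = 0 \<and>
      (\<forall>\<theta>. psd (M' \<theta>)) \<and>
      (\<forall>k\<in>\<Lambda>. \<forall>i j. integrable lam (\<lambda>\<theta>. cis (kdot k \<theta>) * M' \<theta> $ i $ j) \<and>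
          (\<integral>\<theta>. cis (kdot k \<theta>) * M' \<theta> $ i $ j \<partial>lam) = \<Sigma> k $ i $ j) \<and>
      (\<exists>c r. 0 < r \<and> emeasure lam (ball c r \<inter> torus) > 0 \<and>
          (\<forall>\<theta>\<in>ball c r \<inter> torus. pd (M' \<theta>))))"

definition Kcone :: "(int^'d) set \<Rightarrow> (real^'d \<Rightarrow> complex^'m^'m) \<Rightarrow> nat \<Rightarrow> (int^'d \<Rightarrow> complex^'m^'m) \<Rightarrow> (int^'d \<Rightarrow> complex^'m^'m) set" where
  "Kcone \<Lambda> \<Psi> \<nu> Q0 = {SK \<in> fams \<Lambda>. \<forall>Q\<in>Lplus \<Lambda> \<Psi> \<nu>. pairing \<Lambda> SK (\<lambda>k. Q k - Q0 k) \<le> 0}"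

definition Cplus :: "(int^'d) set \<Rightarrow> (int^'d \<Rightarrow> complex^'m^'m) set" where
  "Cplus \<Lambda> = {S \<in> fams \<Lambda>. \<forall>Q\<in>fams \<Lambda>. Q \<noteq> (\<lambda>_. 0) \<and> (\<forall>\<theta>\<in>torus. psd (Qeval \<Lambda> Q \<theta>)) \<longrightarrow>
      0 < pairing \<Lambda> S Q}"

end

theory Submission
  imports Defs
begin

text \<open>Write \<open>\<delta>\<close> for the family with \<open>\<delta>\<^sub>0 = I\<close> and \<open>\<delta>\<^sub>k = 0\<close> otherwise, so that
  \<open>\<langle>\<delta>, Q\<rangle> = Re tr Q\<^sub>0\<close>. The key fact is that \<open>Re tr Q\<^sub>0 > 0\<close> whenever \<open>Q \<noteq> 0\<close> and
  \<open>Q(e\<^sup>i\<^sup>\<theta>) \<ge> 0\<close> on the torus: by discrete orthogonality of characters, the sum of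
  \<open>tr Q\<close> over a sufficiently fine grid is a positive multiple of \<open>tr Q\<^sub>0\<close>, so if the latter
  were \<open>\<le> 0\<close> then \<open>Q\<close> would vanish at every grid point, and discrete Fourier inversion would
  give \<open>Q = 0\<close>. Consequently \<open>\<Sigma> + s\<delta> \<in> \<C>\<^sub>+\<close> for every \<open>s > 0\<close> and every \<open>\<Sigma>\<close> with
  \<open>\<langle>\<Sigma>, Q\<rangle> \<ge> 0\<close> for all nonnegative \<open>Q\<close>, and letting \<open>s \<rightarrow> 0\<^sup>+\<close> puts such \<open>\<Sigma>\<close> in
  the closure of \<open>\<C>\<^sub>+\<close>. Finally \<open>-\<Sigma>\<^sub>K\<close> is such a \<open>\<Sigma>\<close>: for nonnegative \<open>Q\<close> the family
  \<open>Q\<degree> + Q\<close> lies in \<open>\<L>\<^sub>+\<close>, whence \<open>\<langle>\<Sigma>\<^sub>K, Q\<rangle> = \<langle>\<Sigma>\<^sub>K, (Q\<degree> + Q) - Q\<degree>\<rangle> \<le> 0\<close>.\<close>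

lemma qform_axis: "qform A (axis i 1) = A$i$i"
  by (simp add: qform_def matrix_vector_mult_def axis_def mult_delta_right mult_delta_left
      if_distrib[where f = cnj] cong: if_cong)

lemma qform_axis_add_axis:
  assumes "i \<noteq> j"
  shows "qform A (axis i 1 + axis j c) = A$i$i + A$i$j * c + cnj c * A$j$i + cnj c * A$j$j * c"
proof -
  have "(A *v (axis i 1 + axis j c))$l = A$l$i + A$l$j * c" for l
    by (simp add: matrix_vector_mult_def distrib_left sum.distrib axis_def mult_delta_right)
  then show ?thesis using assms
    by (simp add: qform_def distrib_left distrib_right sum.distrib axis_def mult_delta_left
        if_distrib[where f = cnj] cong: if_cong)
qed

lemma hermitian_entry: "hermitian A \<Longrightarrow> A$j$i = cnj (A$i$j)"
  unfolding hermitian_def madj_def by (metis complex_cnj_cnj vec_lambda_beta)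

lemma psd_diag_nonneg: "psd A \<Longrightarrow> 0 \<le> Re (A$i$i)"
  unfolding psd_def by (metis qform_axis)

lemma psd_Re_trace_nonneg: "psd A \<Longrightarrow> 0 \<le> Re (trace A)"
  by (simp add: trace_def psd_diag_nonneg sum_nonneg)

lemma psd_eq_0_if_Re_trace_eq_0:
  assumes "psd A" "Re (trace A) = 0"
  shows "A = 0"
proof -
  have herm: "hermitian A" using assms(1) psd_def by blast
  have diag: "A$i$i = 0" for i
  proof -
    have "Re (A$i$i) = 0"
      using assms(2) psd_diag_nonneg[OF assms(1)]
      by (simp add: trace_def sum_nonneg_eq_0_iff)
    then show ?thesis using hermitian_entry[OF herm, of i i] by (simp add: complex_eq_iff)
  qed
  have "A$i$j = 0" if "i \<noteq> j" for i j
  proof -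
    let ?c = "- cnj (A$i$j)"
    \<comment> \<open>testing with \<open>e\<^sub>i - conj(A\<^sub>i\<^sub>j) e\<^sub>j\<close> gives \<open>-2 |A\<^sub>i\<^sub>j|\<^sup>2 \<ge> 0\<close>\<close>
    have "0 \<le> Re (qform A (axis i 1 + axis j ?c))" using assms(1) psd_def by blast
    also have "\<dots> = - 2 * ((Re (A$i$j))\<^sup>2 + (Im (A$i$j))\<^sup>2)"
      using qform_axis_add_axis[OF that, of A ?c] diag hermitian_entry[OF herm, of j i]
      by (simp add: algebra_simps power2_eq_square)
    finally have "(Re (A$i$j))\<^sup>2 + (Im (A$i$j))\<^sup>2 \<le> 0" by simp
    then show ?thesis by (simp add: complex_eq_iff sum_power2_le_zero_iff)
  qed
  with diag show ?thesis by (metis vec_eq_iff zero_index)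
qed

lemma psd_add: "psd A \<Longrightarrow> psd B \<Longrightarrow> psd (A + B)"
  unfolding psd_def hermitian_def qform_def
  by (auto simp: madj_def vec_eq_iff matrix_vector_mult_def sum.distrib distrib_left distrib_right
      intro!: add_nonneg_nonneg)

lemma psd_add_eq_0_iff:
  assumes "psd A" "psd B"
  shows "A + B = 0 \<longleftrightarrow> A = 0 \<and> B = 0"
proof
  assume "A + B = 0"
  then have "Re (trace A) + Re (trace B) = 0"
    by (metis trace_add trace_0 mat_0 zero_complex.sel(1) plus_complex.sel(1))
  moreover have "0 \<le> Re (trace A)" "0 \<le> Re (trace B)"
    using assms psd_Re_trace_nonneg by auto
  ultimately show "A = 0 \<and> B = 0"
    using assms psd_eq_0_if_Re_trace_eq_0 by (metis add_nonneg_eq_0_iff)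
qed simp

lemma cis_sum: "finite A \<Longrightarrow> cis (\<Sum>i\<in>A. f i) = (\<Prod>i\<in>A. cis (f i))"
  by (induction A rule: finite_induct) (auto simp: cis_mult[symmetric])

lemma sum_cis_grid_1d:
  fixes k :: int and N :: nat
  assumes "0 < N" "\<bar>k\<bar> < int N"
  shows "(\<Sum>x<N. cis (k * (2 * pi * (real x + 1) / N - pi))) = (if k = 0 then of_nat N else 0)"
proof (cases "k = 0")
  case False
  define w where "w = cis (2 * pi * k / N)"
  define c where "c = cis (k * (2 * pi / N - pi))"
  have geometric: "cis (k * (2 * pi * (real x + 1) / N - pi)) = c * w ^ x" for x
  proof -
    have "c * w ^ x = cis (k * (2 * pi / N - pi) + real x * (2 * pi * k / N))"
      unfolding c_def w_def by (simp only: Complex.DeMoivre cis_mult)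
    also have "\<dots> = cis (k * (2 * pi * (real x + 1) / N - pi))"
      using assms(1) by (intro arg_cong[where f = cis]) (simp add: field_simps)
    finally show ?thesis by simp
  qed
  have "w ^ N = cis (real N * (2 * pi * k / N))" unfolding w_def by (rule Complex.DeMoivre)
  also have "\<dots> = 1" using assms(1) by (simp add: cis_multiple_2pi)
  finally have "w ^ N = 1" .
  moreover have "w \<noteq> 1"
  proof
    assume "w = 1"
    then have "cos (2 * pi * k / N) = 1" unfolding w_def by (metis cis.sel(1) one_complex.sel(1))
    then obtain n :: int where "2 * pi * k / N = n * 2 * pi" by (auto simp: cos_one_2pi_int)
    then have "k = n * int N"
      using assms(1) by (simp add: field_simps) (metis of_int_eq_iff of_int_mult of_int_of_nat_eq)
    with assms(2) False show False
      by (cases "n = 0") (auto simp: abs_mult dest: mult_right_mono[of 1 "\<bar>n\<bar>" "int N"])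
  qed
  ultimately have "(\<Sum>x<N. w ^ x) = 0" by (simp add: sum_gp_strict)
  then show ?thesis using False by (simp add: geometric flip: sum_distrib_left)
qed simp

text \<open>Grid coordinates are taken in \<open>-\<pi> + (2\<pi>/N){1,\<dots>,N}\<close> rather than
  \<open>(2\<pi>/N){0,\<dots>,N-1}\<close> so that the grid lies in the half-open torus \<open>(-\<pi>, \<pi>]\<^sup>d\<close>.\<close>

definition grid_indices :: "nat \<Rightarrow> ('d::finite \<Rightarrow> nat) set" where
  "grid_indices N = PiE UNIV (\<lambda>_. {..<N})"

definition grid :: "nat \<Rightarrow> ('d \<Rightarrow> nat) \<Rightarrow> real^'d" where
  "grid N n = (\<chi> i. 2 * pi * (real (n i) + 1) / N - pi)"

lemma finite_grid_indices: "finite (grid_indices N)"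
  unfolding grid_indices_def by (intro finite_PiE) auto

lemma grid_in_torus:
  assumes "0 < N" "n \<in> grid_indices N"
  shows "grid N n \<in> torus"
proof -
  have "- pi < 2 * pi * (real (n i) + 1) / N - pi \<and> 2 * pi * (real (n i) + 1) / N - pi \<le> pi" for i
  proof -
    have "n i < N" using assms(2) unfolding grid_indices_def by (auto simp: PiE_iff)
    then have "real (n i) + 1 \<le> N" by linarith
    then have "2 * pi * (real (n i) + 1) / N \<le> 2 * pi"
      using assms(1) by (simp add: pos_divide_le_eq)
    moreover have "0 < 2 * pi * (real (n i) + 1) / N" using assms(1) by simp
    ultimately show ?thesis by linarith
  qed
  then show ?thesis unfolding torus_def grid_def by simp
qed

lemma sum_grid_cis_kdot:
  fixes k :: "int^'d"
  assumes "0 < N" "\<forall>i. \<bar>k$i\<bar> < int N"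
  shows "(\<Sum>n\<in>grid_indices N. cis (kdot k (grid N n))) = (if k = 0 then of_nat N ^ CARD('d) else 0)"
proof -
  define f where "f i x = cis (k$i * (2 * pi * (real x + 1) / N - pi))" for i x
  have "cis (kdot k (grid N n)) = (\<Prod>i\<in>UNIV. f i (n i))" for n
    unfolding kdot_def grid_def f_def by (simp add: cis_sum)
  then have "(\<Sum>n\<in>grid_indices N. cis (kdot k (grid N n))) = (\<Prod>i\<in>UNIV. \<Sum>x<N. f i x)"
    unfolding grid_indices_def by (simp add: prod_sum_PiE)
  also have "\<dots> = (\<Prod>i\<in>UNIV. if k$i = 0 then of_nat N else 0)"
    unfolding f_def using sum_cis_grid_1d[OF assms(1)] assms(2) by simp
  also have "\<dots> = (if k = 0 then of_nat N ^ CARD('d) else 0)"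
    by (auto simp: vec_eq_iff)
  finally show ?thesis .
qed

lemma kdot_diff: "kdot j t - kdot k t = kdot (j - k) t"
  by (simp add: kdot_def sum_subtractf algebra_simps)

lemma Qeval_entry: "Qeval \<Lambda> Q t $ a $ b = (\<Sum>k\<in>\<Lambda>. cis (- kdot k t) * Q k $ a $ b)"
  by (simp add: Qeval_def csmult_def)

lemma sum_grid_Qeval_Fourier:
  fixes j :: "int^'d"
  assumes "finite \<Lambda>" "0 < N" "\<forall>k\<in>\<Lambda>. \<forall>i. \<bar>j$i - k$i\<bar> < int N"
  shows "(\<Sum>n\<in>grid_indices N. cis (kdot j (grid N n)) * Qeval \<Lambda> Q (grid N n) $ a $ b)
     = (if j \<in> \<Lambda> then of_nat N ^ CARD('d) * Q j $ a $ b else 0)"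
proof -
  have "(\<Sum>n\<in>grid_indices N. cis (kdot j (grid N n)) * Qeval \<Lambda> Q (grid N n) $ a $ b)
     = (\<Sum>n\<in>grid_indices N. \<Sum>k\<in>\<Lambda>. Q k $ a $ b * cis (kdot (j - k) (grid N n)))"
    unfolding Qeval_entry sum_distrib_left
    by (intro sum.cong refl) (simp add: cis_mult flip: kdot_diff)
  also have "\<dots> = (\<Sum>k\<in>\<Lambda>. Q k $ a $ b * (\<Sum>n\<in>grid_indices N. cis (kdot (j - k) (grid N n))))"
    by (subst sum.swap) (simp add: sum_distrib_left)
  also have "\<dots> = (\<Sum>k\<in>\<Lambda>. if k = j then of_nat N ^ CARD('d) * Q k $ a $ b else 0)"
    using assms(3) by (intro sum.cong refl) (simp add: sum_grid_cis_kdot[OF assms(2)])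
  also have "\<dots> = (if j \<in> \<Lambda> then of_nat N ^ CARD('d) * Q j $ a $ b else 0)"
    using assms(1) by simp
  finally show ?thesis .
qed

lemma frequencies_bounded:
  fixes \<Lambda> :: "(int^'d) set"
  assumes "finite \<Lambda>"
  obtains N :: nat where "0 < N" "\<forall>j\<in>\<Lambda>. \<forall>k\<in>\<Lambda>. \<forall>i. \<bar>j$i - k$i\<bar> < int N"
proof
  define B where "B = (\<Sum>k\<in>\<Lambda>. \<Sum>i\<in>UNIV. \<bar>k$i\<bar>)"
  have B: "\<bar>k$i\<bar> \<le> B" if "k \<in> \<Lambda>" for k i
  proof -
    have "\<bar>k$i\<bar> \<le> (\<Sum>i\<in>UNIV. \<bar>k$i\<bar>)" by (rule member_le_sum) auto
    also have "\<dots> \<le> B"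
      unfolding B_def using that assms by (intro member_le_sum) (auto intro: sum_nonneg)
    finally show ?thesis .
  qed
  show "\<forall>j\<in>\<Lambda>. \<forall>k\<in>\<Lambda>. \<forall>i. \<bar>j$i - k$i\<bar> < int (Suc (nat (2 * B)))"
  proof (intro ballI allI)
    fix j k i assume "j \<in> \<Lambda>" "k \<in> \<Lambda>"
    have "\<bar>j$i - k$i\<bar> \<le> \<bar>j$i\<bar> + \<bar>k$i\<bar>" by (rule abs_triangle_ineq4)
    moreover have "2 * B < int (Suc (nat (2 * B)))" by simp
    ultimately show "\<bar>j$i - k$i\<bar> < int (Suc (nat (2 * B)))"
      using B[OF \<open>j \<in> \<Lambda>\<close>, of i] B[OF \<open>k \<in> \<Lambda>\<close>, of i] by linarith
  qed
qed simp

lemma sum_grid_Re_trace_Qeval: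
  fixes Q :: "int^'d \<Rightarrow> complex^'m^'m"
  assumes "finite \<Lambda>" "Q \<in> fams \<Lambda>" "0 < N" "\<forall>k\<in>\<Lambda>. \<forall>i. \<bar>k$i\<bar> < int N"
  shows "(\<Sum>n\<in>grid_indices N. Re (trace (Qeval \<Lambda> Q (grid N n))))
    = real N ^ CARD('d) * Re (trace (Q 0))"
proof -
  have Fourier_0:
    "(\<Sum>n\<in>grid_indices N. Qeval \<Lambda> Q (grid N n) $ a $ a) = of_nat N ^ CARD('d) * Q 0 $ a $ a" for a
    using sum_grid_Qeval_Fourier[OF assms(1,3), of 0 Q a a] assms(2,4)
    by (auto simp: kdot_def fams_def)
  have "(\<Sum>n\<in>grid_indices N. Re (trace (Qeval \<Lambda> Q (grid N n))))
      = Re (\<Sum>a\<in>UNIV. \<Sum>n\<in>grid_indices N. Qeval \<Lambda> Q (grid N n) $ a $ a)"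
    unfolding trace_def by (simp add: sum.swap[of _ "grid_indices N"])
  also have "\<dots> = real N ^ CARD('d) * Re (trace (Q 0))"
    unfolding Fourier_0 trace_def by (simp add: sum_distrib_left)
  finally show ?thesis .
qed

lemma fams_eq_0_if_Qeval_grid_eq_0:
  fixes Q :: "int^'d \<Rightarrow> complex^'m^'m"
  assumes "finite \<Lambda>" "Q \<in> fams \<Lambda>" "0 < N" "\<forall>j\<in>\<Lambda>. \<forall>k\<in>\<Lambda>. \<forall>i. \<bar>j$i - k$i\<bar> < int N"
    and "\<forall>n\<in>grid_indices N. Qeval \<Lambda> Q (grid N n) = 0"
  shows "Q = (\<lambda>_. 0)"
proof
  fix j
  show "Q j = 0"
  proof (cases "j \<in> \<Lambda>")
    case True
    have "of_nat N ^ CARD('d) * Q j $ a $ b = 0" for a b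
      using sum_grid_Qeval_Fourier[OF assms(1,3), of j Q a b] True assms(4,5) by simp
    then show ?thesis using assms(3) by (simp add: vec_eq_iff)
  next
    case False
    then show ?thesis using assms(2) by (simp add: fams_def)
  qed
qed

lemma psd_Qeval_Re_trace_pos:
  fixes Q :: "int^'d \<Rightarrow> complex^'m^'m"
  assumes "finite \<Lambda>" "Q \<in> fams \<Lambda>" "Q \<noteq> (\<lambda>_. 0)" "\<forall>\<theta>\<in>torus. psd (Qeval \<Lambda> Q \<theta>)"
  shows "0 < Re (trace (Q 0))"
proof (rule ccontr)
  assume "\<not> 0 < Re (trace (Q 0))"
  obtain N where N: "0 < N" "\<forall>j\<in>insert 0 \<Lambda>. \<forall>k\<in>insert 0 \<Lambda>. \<forall>i. \<bar>j$i - k$i\<bar> < int N"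
    using frequencies_bounded[of "insert 0 \<Lambda>"] assms(1) by blast
  define tr where "tr n = Re (trace (Qeval \<Lambda> Q (grid N n)))" for n
  have tr_nonneg: "0 \<le> tr n" if "n \<in> grid_indices N" for n
    unfolding tr_def using psd_Re_trace_nonneg assms(4) grid_in_torus[OF N(1) that] by blast
  have "sum tr (grid_indices N) = real N ^ CARD('d) * Re (trace (Q 0))"
    unfolding tr_def using sum_grid_Re_trace_Qeval[OF assms(1,2) N(1)] N(2) by simp
  also have "\<dots> \<le> 0"
    using \<open>\<not> 0 < Re (trace (Q 0))\<close> by (simp add: mult_nonneg_nonpos)
  finally have "\<forall>n\<in>grid_indices N. tr n = 0"
    using sum_nonneg_eq_0_iff[OF finite_grid_indices] tr_nonneg
    by (metis order_antisym sum_nonneg)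
  then have "\<forall>n\<in>grid_indices N. Qeval \<Lambda> Q (grid N n) = 0"
    unfolding tr_def using psd_eq_0_if_Re_trace_eq_0 assms(4) grid_in_torus[OF N(1)] by blast
  then have "Q = (\<lambda>_. 0)"
    using fams_eq_0_if_Qeval_grid_eq_0[OF assms(1,2) N(1)] N(2) by blast
  with assms(3) show False ..
qed

lemma madj_add: "madj (A + B) = madj A + madj B"
  by (simp add: madj_def vec_eq_iff)

lemma madj_uminus: "madj (- A) = - madj A"
  by (simp add: madj_def vec_eq_iff)

lemma madj_scaleR: "madj (t *\<^sub>R A) = t *\<^sub>R madj A"
  by (simp add: madj_def vec_eq_iff complex_cnj_scaleR)

lemma madj_zero: "madj 0 = 0"
  by (simp add: madj_def vec_eq_iff)

lemma madj_mat_1: "madj (mat 1) = mat 1"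
  by (simp add: madj_def vec_eq_iff mat_def)

lemma fams_add: "P \<in> fams \<Lambda> \<Longrightarrow> Q \<in> fams \<Lambda> \<Longrightarrow> (\<lambda>k. P k + Q k) \<in> fams \<Lambda>"
  by (simp add: fams_def madj_add)

lemma fams_uminus: "Q \<in> fams \<Lambda> \<Longrightarrow> (\<lambda>k. - Q k) \<in> fams \<Lambda>"
  by (simp add: fams_def madj_uminus)

lemma fams_scaleR: "Q \<in> fams \<Lambda> \<Longrightarrow> (\<lambda>k. t *\<^sub>R Q k) \<in> fams \<Lambda>"
  by (simp add: fams_def madj_scaleR)

lemma Qeval_add: "Qeval \<Lambda> (\<lambda>k. P k + Q k) \<theta> = Qeval \<Lambda> P \<theta> + Qeval \<Lambda> Q \<theta>"
  by (simp add: vec_eq_iff Qeval_entry distrib_left sum.distrib)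

lemma pairing_add_left: "pairing \<Lambda> (\<lambda>k. A k + B k) Q = pairing \<Lambda> A Q + pairing \<Lambda> B Q"
  by (simp add: pairing_def trace_def matrix_matrix_mult_def distrib_right sum.distrib)

lemma pairing_uminus_left: "pairing \<Lambda> (\<lambda>k. - A k) Q = - pairing \<Lambda> A Q"
  by (simp add: pairing_def trace_def matrix_matrix_mult_def sum_negf)

lemma pairing_scaleR_left: "pairing \<Lambda> (\<lambda>k. t *\<^sub>R A k) Q = t * pairing \<Lambda> A Q"
proof -
  have trace_scaleR: "trace (t *\<^sub>R M) = t *\<^sub>R trace M" for M :: "complex^'m^'m"
    by (simp add: trace_def scaleR_sum_right)
  show ?thesis by (simp add: pairing_def trace_scaleR sum_distrib_left flip: scalar_matrix_assoc)
qed

definition identity_fam :: "int^'d \<Rightarrow> complex^'m^'m" where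
  "identity_fam k = (if k = 0 then mat 1 else 0)"

lemma identity_fam_in_fams: "0 \<in> \<Lambda> \<Longrightarrow> identity_fam \<in> fams \<Lambda>"
  by (auto simp: fams_def identity_fam_def madj_mat_1 madj_zero)

lemma pairing_identity_fam:
  assumes "finite \<Lambda>" "0 \<in> \<Lambda>"
  shows "pairing \<Lambda> identity_fam Q = Re (trace (Q 0))"
proof -
  have "trace (identity_fam k ** madj (Q k)) = (if k = 0 then trace (madj (Q 0)) else 0)" for k
    by (simp add: identity_fam_def trace_def)
  then show ?thesis using assms by (simp add: pairing_def trace_def madj_def)
qed

lemma Lplus_add_psd:
  assumes "Q0 \<in> Lplus \<Lambda> \<Psi> \<nu>" "Q \<in> fams \<Lambda>" "\<forall>\<theta>\<in>torus. psd (Qeval \<Lambda> Q \<theta>)"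
  shows "(\<lambda>k. Q0 k + Q k) \<in> Lplus \<Lambda> \<Psi> \<nu>"
proof -
  define P where "P \<theta> = real \<nu> *\<^sub>R matrix_inv (\<Psi> \<theta>) + Qeval \<Lambda> Q0 \<theta>" for \<theta>
  have Q0: "Q0 \<in> fams \<Lambda>" "\<forall>\<theta>\<in>torus. psd (P \<theta>)" "\<exists>\<theta>\<in>torus. P \<theta> \<noteq> 0"
    using assms(1) by (auto simp: Lplus_def P_def)
  have shift: "real \<nu> *\<^sub>R matrix_inv (\<Psi> \<theta>) + Qeval \<Lambda> (\<lambda>k. Q0 k + Q k) \<theta> = P \<theta> + Qeval \<Lambda> Q \<theta>"
    for \<theta> by (simp add: P_def Qeval_add add.assoc)
  have "\<forall>\<theta>\<in>torus. psd (P \<theta> + Qeval \<Lambda> Q \<theta>)"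
    using Q0(2) assms(3) by (simp add: psd_add)
  moreover have "\<exists>\<theta>\<in>torus. P \<theta> + Qeval \<Lambda> Q \<theta> \<noteq> 0"
    using Q0(2,3) assms(3) psd_add_eq_0_iff by blast
  ultimately show ?thesis
    using fams_add[OF Q0(1) assms(2)] by (simp add: Lplus_def shift)
qed

lemma Kcone_pairing_psd_nonpos:
  assumes "SK \<in> Kcone \<Lambda> \<Psi> \<nu> Q0" "Q0 \<in> Lplus \<Lambda> \<Psi> \<nu>"
    and "Q \<in> fams \<Lambda>" "\<forall>\<theta>\<in>torus. psd (Qeval \<Lambda> Q \<theta>)"
  shows "pairing \<Lambda> SK Q \<le> 0"
proof -
  have "\<forall>P\<in>Lplus \<Lambda> \<Psi> \<nu>. pairing \<Lambda> SK (\<lambda>k. P k - Q0 k) \<le> 0"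
    using assms(1) by (simp add: Kcone_def)
  from bspec[OF this Lplus_add_psd[OF assms(2-4)]] show ?thesis by simp
qed

lemma dual_cone_add_identity_in_Cplus:
  assumes "finite \<Lambda>" "0 \<in> \<Lambda>" "S \<in> fams \<Lambda>"
    and "\<forall>Q\<in>fams \<Lambda>. (\<forall>\<theta>\<in>torus. psd (Qeval \<Lambda> Q \<theta>)) \<longrightarrow> 0 \<le> pairing \<Lambda> S Q"
    and "0 < s"
  shows "(\<lambda>k. S k + s *\<^sub>R identity_fam k) \<in> Cplus \<Lambda>"
proof -
  have "0 < pairing \<Lambda> (\<lambda>k. S k + s *\<^sub>R identity_fam k) Q"
    if "Q \<in> fams \<Lambda>" "Q \<noteq> (\<lambda>_. 0)" "\<forall>\<theta>\<in>torus. psd (Qeval \<Lambda> Q \<theta>)" for Q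
  proof -
    have "0 \<le> pairing \<Lambda> S Q" using assms(4) that(1,3) by blast
    moreover have "0 < Re (trace (Q 0))" using psd_Qeval_Re_trace_pos[OF assms(1) that] .
    moreover have "pairing \<Lambda> (\<lambda>k. S k + s *\<^sub>R identity_fam k) Q
        = pairing \<Lambda> S Q + s * Re (trace (Q 0))"
      by (simp add: pairing_add_left pairing_scaleR_left pairing_identity_fam assms(1,2))
    ultimately show ?thesis using assms(5) by (simp add: add_nonneg_pos)
  qed
  moreover have "(\<lambda>k. S k + s *\<^sub>R identity_fam k) \<in> fams \<Lambda>"
    using assms(2,3) by (intro fams_add fams_scaleR identity_fam_in_fams)
  ultimately show ?thesis by (simp add: Cplus_def)
qed

lemma dual_cone_subset_closure_Cplus:
  assumes "finite \<Lambda>" "0 \<in> \<Lambda>" "S \<in> fams \<Lambda>"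
    and "\<forall>Q\<in>fams \<Lambda>. (\<forall>\<theta>\<in>torus. psd (Qeval \<Lambda> Q \<theta>)) \<longrightarrow> 0 \<le> pairing \<Lambda> S Q"
  shows "S \<in> closure (Cplus \<Lambda>)"
proof -
  define g where "g s = (\<lambda>k. S k + s *\<^sub>R identity_fam k)" for s :: real
  have "continuous_on UNIV g"
    unfolding g_def by (intro continuous_on_coordinatewise_then_product continuous_intros)
  then have "(g \<longlongrightarrow> g 0) (at_right 0)"
    by (metis at_le continuous_on_def UNIV_I subset_UNIV tendsto_mono)
  moreover have "g 0 = S" by (simp add: g_def)
  moreover have "\<forall>\<^sub>F s in at_right 0. g s \<in> closure (Cplus \<Lambda>)"
    using eventually_at_right_less[of "0::real"]
    by (rule eventually_mono) (use dual_cone_add_identity_in_Cplus[OF assms] closure_subset in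
        \<open>auto simp: g_def\<close>)
  ultimately show ?thesis
    by (metis Lim_in_closed_set closed_closure trivial_limit_at_right_real)
qed

theorem lemma7p1:
  fixes \<Lambda> :: "(int^'d) set"
    and \<Sigma> SK Q0 :: "int^'d \<Rightarrow> complex^'m^'m"
    and \<Psi> :: "real^'d \<Rightarrow> complex^'m^'m"
    and \<nu> :: nat
  assumes "\<nu> \<ge> 2"
    and "finite \<Lambda>" and "0 \<in> \<Lambda>" and "\<forall>k\<in>\<Lambda>. - k \<in> \<Lambda>"
    and "\<Sigma> \<in> fams \<Lambda>"
    and "rational_mfun \<Psi>" and "bounded_coercive \<Psi>"
    and "feasible \<Lambda> \<Sigma>"
    and "Q0 \<in> Lplus \<Lambda> \<Psi> \<nu>"
    and "\<forall>Q\<in>Lplus \<Lambda> \<Psi> \<nu>. J_nu \<Lambda> \<Sigma> \<Psi> \<nu> Q0 \<le> J_nu \<Lambda> \<Sigma> \<Psi> \<nu> Q"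
    and "\<forall>Q\<in>Lplus \<Lambda> \<Psi> \<nu>. J_nu \<Lambda> \<Sigma> \<Psi> \<nu> Q = J_nu \<Lambda> \<Sigma> \<Psi> \<nu> Q0 \<longrightarrow> Q = Q0"
    and "Q0 \<in> Lplus_boundary \<Lambda> \<Psi> \<nu>"
    and "SK \<in> Kcone \<Lambda> \<Psi> \<nu> Q0"
  shows "(\<lambda>k. - SK k) \<in> closure (Cplus \<Lambda>)"
proof -
  have SK: "SK \<in> fams \<Lambda>" using assms(13) by (simp add: Kcone_def)
  have "0 \<le> pairing \<Lambda> (\<lambda>k. - SK k) Q"
    if "Q \<in> fams \<Lambda>" "\<forall>\<theta>\<in>torus. psd (Qeval \<Lambda> Q \<theta>)" for Q
    using Kcone_pairing_psd_nonpos[OF assms(13,9) that] by (simp add: pairing_uminus_left)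
  then show ?thesis
    using dual_cone_subset_closure_Cplus[OF assms(2,3) fams_uminus[OF SK]] by blast
qed

end
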